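(* If $n\ge1$, $m>0$ and $(n,m)\neq(1,1)$, then $|A_{n,m}|=4n$.
   Context: The Yoke graph $Y_{n,m}$ has vertices the tuples $v=(v_0,\dots,v_{m+1})$ with $v_0,v_{m+1}\in\mathbb{Z}_n$, $v_1,\dots,v_m\in\{0,1\}$, $\sum v_i\equiv0\pmod n$; $u\sim v$ iff there is $0\le i\le m$ with $u_j=v_j$ for $j\notin\{i,i+1\}$ and either ($u_i=v_i+1$, $u_{i+1}=v_{i+1}-1$) or ($u_i=v_i-1$, $u_{i+1}=v_{i+1}+1$), buckets mod $n$. Define automorphisms (bucket entries mod $n$): $\varphi(v_0,v_1,\dots,v_m,v_{m+1})=(v_0+1,v_1,\dots,v_m,v_{m+1}-1)$; $\psi(v_0,\dots,v_{m+1})=(v_{m+1},v_m,\dots,v_1,v_0)$; $\tau(v_0,v_1,\dots,v_m,v_{m+1})=(-v_0,1-v_1,\dots,1-v_m,-(m+v_{m+1}))$. $A_{n,m}$ is the subgroup of $\operatorname{Aut}(Y_{n,m})$ generated by $\varphi,\psi,\tau$. *)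

theory Defs
  imports "HOL-Algebra.Bij" "HOL-Algebra.Generated_Groups"
begin

text \<open>Vertices of the Yoke graph Y(n,m): integer lists v = [v_0, ..., v_(m+1)]
  of length m+2; the buckets v_0 and v_(m+1) are residues mod n represented by
  their canonical representatives in {0..<n}; the middle entries are bits.\<close>

definition yoke_V :: "nat \<Rightarrow> nat \<Rightarrow> int list set" where
  "yoke_V n m = {v. length v = m + 2
      \<and> v ! 0 \<in> {0..<int n} \<and> v ! (m+1) \<in> {0..<int n}
      \<and> (\<forall>i\<in>{1..m}. v ! i \<in> {0, 1})
      \<and> sum_list v mod int n = 0}"

definition yoke_entry_eq :: "nat \<Rightarrow> nat \<Rightarrow> nat \<Rightarrow> int \<Rightarrow> int \<Rightarrow> bool" where
  "yoke_entry_eq n m i a b = (if i = 0 \<or> i = m + 1 then a mod int n = b mod int n else a = b)"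

definition yoke_adj :: "nat \<Rightarrow> nat \<Rightarrow> int list \<Rightarrow> int list \<Rightarrow> bool" where
  "yoke_adj n m u v = (u \<in> yoke_V n m \<and> v \<in> yoke_V n m \<and>
     (\<exists>i\<le>m. (\<forall>j<m+2. j \<noteq> i \<and> j \<noteq> i + 1 \<longrightarrow> u ! j = v ! j) \<and>
        ((yoke_entry_eq n m i (u ! i) (v ! i + 1) \<and>
          yoke_entry_eq n m (i+1) (u ! (i+1)) (v ! (i+1) - 1)) \<or>
         (yoke_entry_eq n m i (u ! i) (v ! i - 1) \<and>
          yoke_entry_eq n m (i+1) (u ! (i+1)) (v ! (i+1) + 1)))))"

definition yoke_aut :: "nat \<Rightarrow> nat \<Rightarrow> (int list \<Rightarrow> int list) set" where
  "yoke_aut n m = {f \<in> Bij (yoke_V n m).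
      \<forall>u\<in>yoke_V n m. \<forall>v\<in>yoke_V n m. yoke_adj n m (f u) (f v) = yoke_adj n m u v}"

definition AutYoke :: "nat \<Rightarrow> nat \<Rightarrow> (int list \<Rightarrow> int list) monoid" where
  "AutYoke n m = (BijGroup (yoke_V n m)) \<lparr>carrier := yoke_aut n m\<rparr>"

text \<open>The three maps phi, psi, tau (bucket entries reduced mod n), restricted to
  the vertex set so that they are elements of the permutation group.\<close>
definition yoke_phi :: "nat \<Rightarrow> nat \<Rightarrow> int list \<Rightarrow> int list" where
  "yoke_phi n m = (\<lambda>v \<in> yoke_V n m.
      v[0 := (v ! 0 + 1) mod int n, m + 1 := (v ! (m+1) - 1) mod int n])"

definition yoke_psi :: "nat \<Rightarrow> nat \<Rightarrow> int list \<Rightarrow> int list" where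
  "yoke_psi n m = (\<lambda>v \<in> yoke_V n m. rev v)"

definition yoke_tau :: "nat \<Rightarrow> nat \<Rightarrow> int list \<Rightarrow> int list" where
  "yoke_tau n m = (\<lambda>v \<in> yoke_V n m.
      map (\<lambda>i. if i = 0 then (- (v ! 0)) mod int n
               else if i = m + 1 then (- (int m + v ! (m+1))) mod int n
               else 1 - v ! i) [0..<m+2])"

definition A_yoke :: "nat \<Rightarrow> nat \<Rightarrow> (int list \<Rightarrow> int list) set" where
  "A_yoke n m = generate (AutYoke n m) {yoke_phi n m, yoke_psi n m, yoke_tau n m}"

end

(*
  Write every element of A(n,m) as phi^k psi^r tau^c with k taken mod n and r, c in {0,1}.
  The set of these 4n maps contains the identity and is closed under left multiplication by
  the generators and their inverses, because psi phi^k = phi^-k psi, tau phi^k = phi^-k tau and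
  tau psi = phi^m psi tau; hence it is exactly A(n,m). The 4n maps are pairwise distinct: their
  values on the zero vertex and on (0,1,0,...,0,n-1) determine k, r and c, except when
  (n,m) = (1,1), where psi is the identity.
*)

theory Submission
  imports Defs "HOL-Number_Theory.Cong"
begin

lemma sum_list_split_ends:
  fixes v :: "'a::comm_monoid_add list"
  assumes "length v = m + 2"
  shows "sum_list v = v ! 0 + v ! (m + 1) + (\<Sum>i=1..m. v ! i)"
proof -
  have "{0..<m + 2} = insert 0 (insert (m + 1) {1..m})" by auto
  then show ?thesis
    using assms by (simp add: sum_list_sum_nth add.assoc)
qed

lemma all_less_reflect: "(\<forall>j<Suc N. P (N - j)) \<longleftrightarrow> (\<forall>j<Suc N. P j)"
  by (metis diff_diff_cancel diff_less_Suc less_Suc_eq_le)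

lemma minus_one_mod_int: "n > 0 \<Longrightarrow> (- 1) mod int n = int n - 1"
  by (cases "n = 1") (simp_all add: zmod_zminus1_eq_if)

lemma minus_one_add_mod_ne:
  "n \<ge> 2 \<Longrightarrow> k \<in> {0..<int n} \<Longrightarrow> (int n - 1 + k) mod int n \<noteq> k"
proof
  assume "n \<ge> 2" and "k \<in> {0..<int n}" and "(int n - 1 + k) mod int n = k"
  then have "(int n - 1 + k) mod int n = k mod int n" by simp
  then have "[int n - 1 = 0] (mod int n)"
    using cong_add_rcancel[of "int n - 1" k 0 "int n"] by (simp add: cong_def)
  with \<open>n \<ge> 2\<close> show False
    by (simp add: cong_def minus_one_mod_int)
qed

lemma nth_rev_length_add_2:
  "length v = m + 2 \<Longrightarrow> j < m + 2 \<Longrightarrow> rev v ! j = v ! (m + 1 - j)"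
  by (simp add: rev_nth)

lemma BijGroup_mult:
  "f \<in> Bij S \<Longrightarrow> g \<in> Bij S \<Longrightarrow> f \<otimes>\<^bsub>BijGroup S\<^esub> g = compose S f g"
  by (simp add: BijGroup_def)

lemma (in group) generate_subset_left_closed:
  assumes H: "H \<subseteq> carrier G" and S: "S \<subseteq> carrier G" "\<one> \<in> S"
    and closed: "\<And>h s. h \<in> H \<Longrightarrow> s \<in> S \<Longrightarrow> h \<otimes> s \<in> S"
      "\<And>h s. h \<in> H \<Longrightarrow> s \<in> S \<Longrightarrow> inv h \<otimes> s \<in> S"
  shows "generate G H \<subseteq> S"
proof
  fix x assume "x \<in> generate G H"
  then have "\<forall>s\<in>S. x \<otimes> s \<in> S"
  proof induction
    case (eng h1 h2)
    then show ?case
      using generate_in_carrier[OF H] S(1) by (auto simp: m_assoc)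
  qed (use S closed in auto)
  then show "x \<in> S"
    using S generate_in_carrier[OF H \<open>x \<in> generate G H\<close>] by force
qed

section \<open>The vertex set and the maps phi, psi, tau on lists\<close>

lemma yoke_V_length: "v \<in> yoke_V n m \<Longrightarrow> length v = m + 2"
  by (simp add: yoke_V_def)

lemma yoke_V_buckets:
  "v \<in> yoke_V n m \<Longrightarrow> v ! 0 \<in> {0..<int n} \<and> v ! (m + 1) \<in> {0..<int n}"
  by (simp add: yoke_V_def)

lemma yoke_V_bit:
  "v \<in> yoke_V n m \<Longrightarrow> 1 \<le> i \<Longrightarrow> i \<le> m \<Longrightarrow> v ! i = 0 \<or> v ! i = 1"
  by (auto simp add: yoke_V_def)

text \<open>The maps phi^k and tau, not restricted to the vertex set.\<close>

definition yoke_shift :: "nat \<Rightarrow> nat \<Rightarrow> int \<Rightarrow> int list \<Rightarrow> int list" where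
  "yoke_shift n m k v = v[0 := (v ! 0 + k) mod int n, m + 1 := (v ! (m + 1) - k) mod int n]"

definition yoke_compl :: "nat \<Rightarrow> nat \<Rightarrow> int list \<Rightarrow> int list" where
  "yoke_compl n m v = map (\<lambda>i. if i = 0 then (- (v ! 0)) mod int n
      else if i = m + 1 then (- (int m + v ! (m + 1))) mod int n
      else 1 - v ! i) [0..<m + 2]"

lemma length_yoke_shift [simp]: "length (yoke_shift n m k v) = length v"
  by (simp add: yoke_shift_def)

lemma length_yoke_compl [simp]: "length (yoke_compl n m v) = m + 2"
  by (simp add: yoke_compl_def)

lemma nth_yoke_shift:
  "length v = m + 2 \<Longrightarrow> j < m + 2 \<Longrightarrow> yoke_shift n m k v ! j =
     (if j = 0 then (v ! 0 + k) mod int n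
      else if j = m + 1 then (v ! (m + 1) - k) mod int n else v ! j)"
  by (auto simp add: yoke_shift_def nth_list_update)

lemma nth_yoke_compl:
  "j < m + 2 \<Longrightarrow> yoke_compl n m v ! j =
     (if j = 0 then (- (v ! 0)) mod int n
      else if j = m + 1 then (- (int m + v ! (m + 1))) mod int n else 1 - v ! j)"
  by (simp add: yoke_compl_def del: upt_Suc)

lemma yoke_shift_in_V:
  assumes v: "v \<in> yoke_V n m"
  shows "yoke_shift n m k v \<in> yoke_V n m"
proof -
  have len: "length v = m + 2" and n: "n > 0"
    using yoke_V_length[OF v] yoke_V_buckets[OF v] by auto
  have "sum_list (yoke_shift n m k v)
      = (v ! 0 + k) mod int n + (v ! (m + 1) - k) mod int n + (\<Sum>i=1..m. v ! i)"
    using sum_list_split_ends[of "yoke_shift n m k v" m] len by (simp add: nth_yoke_shift)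
  also have "[\<dots> = (v ! 0 + k) + (v ! (m + 1) - k) + (\<Sum>i=1..m. v ! i)] (mod int n)"
    by (intro cong_add) simp_all
  also have "(v ! 0 + k) + (v ! (m + 1) - k) + (\<Sum>i=1..m. v ! i) = sum_list v"
    using sum_list_split_ends[OF len] by simp
  finally show ?thesis
    using v len n yoke_V_bit[OF v] by (auto simp: yoke_V_def nth_yoke_shift cong_def)
qed

lemma rev_in_yoke_V:
  assumes v: "v \<in> yoke_V n m"
  shows "rev v \<in> yoke_V n m"
proof -
  have len: "length v = m + 2" using yoke_V_length[OF v] .
  have "rev v ! i \<in> {0, 1}" if "i \<in> {1..m}" for i
    using yoke_V_bit[OF v, of "m + 1 - i"] that len by (auto simp: nth_rev_length_add_2)
  then show ?thesis
    using v len by (simp add: yoke_V_def nth_rev_length_add_2)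
qed

lemma yoke_compl_in_V:
  assumes v: "v \<in> yoke_V n m"
  shows "yoke_compl n m v \<in> yoke_V n m"
proof -
  have len: "length v = m + 2" and n: "n > 0"
    using yoke_V_length[OF v] yoke_V_buckets[OF v] by auto
  have "(\<Sum>i=1..m. 1 - v ! i) = int m - (\<Sum>i=1..m. v ! i)"
    by (simp add: sum_subtractf)
  then have "sum_list (yoke_compl n m v)
      = (- (v ! 0)) mod int n + (- (int m + v ! (m + 1))) mod int n + (int m - (\<Sum>i=1..m. v ! i))"
    using sum_list_split_ends[of "yoke_compl n m v" m] by (simp add: nth_yoke_compl)
  also have "[\<dots> = - (v ! 0) - (int m + v ! (m + 1)) + (int m - (\<Sum>i=1..m. v ! i))] (mod int n)"
    unfolding diff_conv_add_uminus by (intro cong_add) simp_all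
  also have "- (v ! 0) - (int m + v ! (m + 1)) + (int m - (\<Sum>i=1..m. v ! i)) = - sum_list v"
    using sum_list_split_ends[OF len] by simp
  also have "[- sum_list v = 0] (mod int n)"
    using v by (simp add: yoke_V_def cong_def zmod_zminus1_eq_if)
  finally have "[sum_list (yoke_compl n m v) = 0] (mod int n)" .
  moreover have "yoke_compl n m v ! i \<in> {0, 1}" if "i \<in> {1..m}" for i
    using yoke_V_bit[OF v, of i] that by (auto simp: nth_yoke_compl)
  ultimately show ?thesis
    using n by (simp add: yoke_V_def nth_yoke_compl cong_def)
qed

lemma yoke_shift_add:
  "length w = m + 2 \<Longrightarrow> yoke_shift n m a (yoke_shift n m b w) = yoke_shift n m (a + b) w"
  by (rule nth_equalityI) (auto simp: nth_yoke_shift mod_simps algebra_simps)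

lemma yoke_shift_0: "w \<in> yoke_V n m \<Longrightarrow> yoke_shift n m 0 w = w"
  using yoke_V_length[of w] yoke_V_buckets[of w]
  by (intro nth_equalityI) (auto simp: nth_yoke_shift)

lemma yoke_shift_mod:
  "length w = m + 2 \<Longrightarrow> yoke_shift n m (k mod int n) w = yoke_shift n m k w"
  by (rule nth_equalityI) (auto simp: nth_yoke_shift mod_simps)

lemma rev_yoke_shift:
  "length w = m + 2 \<Longrightarrow> rev (yoke_shift n m k w) = yoke_shift n m (- k) (rev w)"
  by (rule nth_equalityI) (auto simp: nth_yoke_shift nth_rev_length_add_2 Suc_diff_le)

lemma yoke_compl_shift:
  "length w = m + 2 \<Longrightarrow> yoke_compl n m (yoke_shift n m k w) = yoke_shift n m (- k) (yoke_compl n m w)"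
  by (rule nth_equalityI)
    (auto simp: nth_yoke_shift nth_yoke_compl mod_simps intro!: arg_cong[where f = "\<lambda>x. x mod int n"])

lemma yoke_compl_rev:
  "length w = m + 2 \<Longrightarrow> yoke_compl n m (rev w) = yoke_shift n m (int m) (rev (yoke_compl n m w))"
  by (rule nth_equalityI)
    (auto simp: nth_yoke_shift nth_yoke_compl nth_rev_length_add_2 mod_simps
      intro!: arg_cong[where f = "\<lambda>x. x mod int n"])

lemma yoke_compl_compl: "w \<in> yoke_V n m \<Longrightarrow> yoke_compl n m (yoke_compl n m w) = w"
  using yoke_V_length[of w] yoke_V_buckets[of w]
  by (intro nth_equalityI) (auto simp: nth_yoke_compl mod_simps)

lemma bij_betw_yoke_shift: "bij_betw (yoke_shift n m k) (yoke_V n m) (yoke_V n m)"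
  by (rule bij_betw_byWitness[where f' = "yoke_shift n m (- k)"])
    (auto simp: yoke_shift_add yoke_shift_0 yoke_V_length yoke_shift_in_V)

lemma bij_betw_rev_yoke_V: "bij_betw rev (yoke_V n m) (yoke_V n m)"
  by (rule bij_betw_byWitness[where f' = rev]) (auto simp: rev_in_yoke_V)

lemma bij_betw_yoke_compl: "bij_betw (yoke_compl n m) (yoke_V n m) (yoke_V n m)"
  by (rule bij_betw_byWitness[where f' = "yoke_compl n m"])
    (auto simp: yoke_compl_compl yoke_compl_in_V)

section \<open>Invariance of adjacency\<close>

definition yoke_move :: "nat \<Rightarrow> nat \<Rightarrow> int list \<Rightarrow> int list \<Rightarrow> nat \<Rightarrow> int \<Rightarrow> bool" where
  "yoke_move n m u v i d \<longleftrightarrow>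
     yoke_entry_eq n m i (u ! i) (v ! i + d) \<and>
     yoke_entry_eq n m (i + 1) (u ! (i + 1)) (v ! (i + 1) - d)"

definition yoke_adj_at :: "nat \<Rightarrow> nat \<Rightarrow> int list \<Rightarrow> int list \<Rightarrow> nat \<Rightarrow> bool" where
  "yoke_adj_at n m u v i \<longleftrightarrow>
     (\<forall>j<m + 2. j \<noteq> i \<and> j \<noteq> i + 1 \<longrightarrow> u ! j = v ! j) \<and>
     (yoke_move n m u v i 1 \<or> yoke_move n m u v i (- 1))"

lemma yoke_adj_iff:
  "yoke_adj n m u v \<longleftrightarrow> u \<in> yoke_V n m \<and> v \<in> yoke_V n m \<and> (\<exists>i\<le>m. yoke_adj_at n m u v i)"
  by (simp add: yoke_adj_def yoke_adj_at_def yoke_move_def)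

lemma yoke_entry_eq_shift:
  assumes "length u = m + 2" "length v = m + 2" "j < m + 2"
  shows "yoke_entry_eq n m j (yoke_shift n m k u ! j) (yoke_shift n m k v ! j + d)
     = yoke_entry_eq n m j (u ! j) (v ! j + d)"
proof -
  have "[(x + k) mod int n = (y + k) mod int n + d] (mod int n) \<longleftrightarrow> [x = y + d] (mod int n)"
    for x y k :: int
    using cong_add_rcancel[of x k "y + d" "int n"] by (simp add: cong_def mod_simps algebra_simps)
  from this[of "u ! j" k "v ! j"] this[of "u ! j" "- k" "v ! j"] show ?thesis
    using assms by (auto simp: yoke_entry_eq_def nth_yoke_shift cong_def)
qed

lemma yoke_entry_eq_compl:
  assumes "j < m + 2"
  shows "yoke_entry_eq n m j (yoke_compl n m u ! j) (yoke_compl n m v ! j + d)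
     = yoke_entry_eq n m j (u ! j) (v ! j - d)"
proof -
  have "[(- (c + x)) mod int n = (- (c + y)) mod int n + d] (mod int n) \<longleftrightarrow> [x = y - d] (mod int n)"
    for x y c :: int
    using cong_minus_minus_iff[of "c + x" "c + (y - d)" "int n"]
      cong_add_lcancel[of c x "y - d" "int n"]
    by (simp add: cong_def mod_simps algebra_simps)
  from this[of 0 "u ! j" "v ! j"] this[of "int m" "u ! j" "v ! j"] show ?thesis
    using assms by (auto simp: yoke_entry_eq_def nth_yoke_compl cong_def)
qed

lemma yoke_V_nth_eq_iff:
  assumes "u \<in> yoke_V n m" "v \<in> yoke_V n m" "j < m + 2"
  shows "u ! j = v ! j \<longleftrightarrow> yoke_entry_eq n m j (u ! j) (v ! j)"
  using assms yoke_V_buckets[OF assms(1)] yoke_V_buckets[OF assms(2)]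
  by (auto simp: yoke_entry_eq_def)

lemma yoke_adj_at_shift:
  assumes u: "u \<in> yoke_V n m" and v: "v \<in> yoke_V n m" and i: "i \<le> m"
  shows "yoke_adj_at n m (yoke_shift n m k u) (yoke_shift n m k v) i = yoke_adj_at n m u v i"
proof -
  note entry = yoke_entry_eq_shift[OF yoke_V_length[OF u] yoke_V_length[OF v]]
  have "yoke_shift n m k u ! j = yoke_shift n m k v ! j \<longleftrightarrow> u ! j = v ! j" if "j < m + 2" for j
    using entry[OF that, where k = k and d = 0] that
    by (simp add: yoke_V_nth_eq_iff[OF u v]
        yoke_V_nth_eq_iff[OF yoke_shift_in_V[OF u] yoke_shift_in_V[OF v]])
  moreover have "yoke_move n m (yoke_shift n m k u) (yoke_shift n m k v) i d = yoke_move n m u v i d"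
    for d
    using entry[of i, where k = k and d = d] entry[of "i + 1", where k = k and d = "- d"] i
    by (simp add: yoke_move_def)
  ultimately show ?thesis
    by (simp add: yoke_adj_at_def)
qed

lemma yoke_adj_at_compl:
  assumes u: "u \<in> yoke_V n m" and v: "v \<in> yoke_V n m" and i: "i \<le> m"
  shows "yoke_adj_at n m (yoke_compl n m u) (yoke_compl n m v) i = yoke_adj_at n m u v i"
proof -
  have "yoke_compl n m u ! j = yoke_compl n m v ! j \<longleftrightarrow> u ! j = v ! j" if "j < m + 2" for j
    using yoke_entry_eq_compl[OF that, of n u v 0] that
    by (simp add: yoke_V_nth_eq_iff[OF u v]
        yoke_V_nth_eq_iff[OF yoke_compl_in_V[OF u] yoke_compl_in_V[OF v]])
  moreover have "yoke_move n m (yoke_compl n m u) (yoke_compl n m v) i d = yoke_move n m u v i (- d)"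
    for d
    using yoke_entry_eq_compl[of i m n u v d] yoke_entry_eq_compl[of "i + 1" m n u v "- d"] i
    by (simp add: yoke_move_def)
  ultimately show ?thesis
    by (auto simp: yoke_adj_at_def)
qed

lemma yoke_entry_eq_reflect: "j \<le> m + 1 \<Longrightarrow> yoke_entry_eq n m (m + 1 - j) = yoke_entry_eq n m j"
  by (auto simp: yoke_entry_eq_def fun_eq_iff)

lemma yoke_adj_at_rev:
  assumes u: "length u = m + 2" and v: "length v = m + 2" and i: "i \<le> m"
  shows "yoke_adj_at n m (rev u) (rev v) i = yoke_adj_at n m u v (m - i)"
proof -
  have "j \<noteq> i \<and> j \<noteq> i + 1 \<longleftrightarrow> m + 1 - j \<noteq> m - i \<and> m + 1 - j \<noteq> m - i + 1" if "j < m + 2" for j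
    using that i by auto
  then have "(\<forall>j<m + 2. j \<noteq> i \<and> j \<noteq> i + 1 \<longrightarrow> rev u ! j = rev v ! j)
      \<longleftrightarrow> (\<forall>j<m + 2. m + 1 - j \<noteq> m - i \<and> m + 1 - j \<noteq> m - i + 1 \<longrightarrow>
            u ! (m + 1 - j) = v ! (m + 1 - j))"
    by (simp add: nth_rev_length_add_2 u v)
  also have "\<dots> \<longleftrightarrow> (\<forall>j<m + 2. j \<noteq> m - i \<and> j \<noteq> m - i + 1 \<longrightarrow> u ! j = v ! j)"
    using all_less_reflect[where N = "m + 1"
        and P = "\<lambda>j. j \<noteq> m - i \<and> j \<noteq> m - i + 1 \<longrightarrow> u ! j = v ! j"]
    by simp
  moreover have "yoke_move n m (rev u) (rev v) i d = yoke_move n m u v (m - i) (- d)" for d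
    using yoke_entry_eq_reflect[of i m n] yoke_entry_eq_reflect[of "i + 1" m n] i
    by (auto simp: yoke_move_def nth_rev_length_add_2 u v Suc_diff_le)
  ultimately show ?thesis
    by (auto simp: yoke_adj_at_def)
qed


definition yoke_automorphism :: "nat \<Rightarrow> nat \<Rightarrow> (int list \<Rightarrow> int list) \<Rightarrow> bool" where
  "yoke_automorphism n m f \<longleftrightarrow> bij_betw f (yoke_V n m) (yoke_V n m) \<and>
     (\<forall>u\<in>yoke_V n m. \<forall>v\<in>yoke_V n m. yoke_adj n m (f u) (f v) = yoke_adj n m u v)"

lemma yoke_aut_iff: "f \<in> yoke_aut n m \<longleftrightarrow> f \<in> extensional (yoke_V n m) \<and> yoke_automorphism n m f"
  by (auto simp: yoke_aut_def yoke_automorphism_def Bij_def)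

lemma yoke_automorphism_restrict:
  "yoke_automorphism n m (restrict f (yoke_V n m)) \<longleftrightarrow> yoke_automorphism n m f"
proof -
  have "bij_betw (restrict f (yoke_V n m)) (yoke_V n m) (yoke_V n m)
      \<longleftrightarrow> bij_betw f (yoke_V n m) (yoke_V n m)"
    by (rule bij_betw_cong) simp
  then show ?thesis
    by (simp add: yoke_automorphism_def)
qed

lemma restrict_in_yoke_aut: "yoke_automorphism n m f \<Longrightarrow> restrict f (yoke_V n m) \<in> yoke_aut n m"
  by (simp add: yoke_aut_iff yoke_automorphism_restrict)

lemma yoke_automorphism_id: "yoke_automorphism n m id"
  by (simp add: yoke_automorphism_def)

lemma yoke_automorphism_comp:
  "yoke_automorphism n m f \<Longrightarrow> yoke_automorphism n m g \<Longrightarrow> yoke_automorphism n m (f \<circ> g)"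
  by (auto simp: yoke_automorphism_def bij_betw_trans bij_betwE)

lemma yoke_automorphism_inv_into:
  assumes f: "yoke_automorphism n m f"
  shows "yoke_automorphism n m (inv_into (yoke_V n m) f)"
proof -
  let ?g = "inv_into (yoke_V n m) f"
  have bij: "bij_betw f (yoke_V n m) (yoke_V n m)" using f by (simp add: yoke_automorphism_def)
  have "yoke_adj n m (?g u) (?g v) = yoke_adj n m u v" if "u \<in> yoke_V n m" "v \<in> yoke_V n m" for u v
  proof -
    have "?g u \<in> yoke_V n m" "?g v \<in> yoke_V n m"
      using that bij_betwE[OF bij_betw_inv_into[OF bij]] by auto
    then have "yoke_adj n m (f (?g u)) (f (?g v)) = yoke_adj n m (?g u) (?g v)"
      using f by (simp add: yoke_automorphism_def)
    then show ?thesis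
      using that bij_betw_inv_into_right[OF bij] by simp
  qed
  then show ?thesis
    using bij_betw_inv_into[OF bij] by (simp add: yoke_automorphism_def)
qed

lemma yoke_automorphismI:
  assumes bij: "bij_betw f (yoke_V n m) (yoke_V n m)"
    and adj_at: "\<And>u v i. u \<in> yoke_V n m \<Longrightarrow> v \<in> yoke_V n m \<Longrightarrow> i \<le> m \<Longrightarrow>
      yoke_adj_at n m (f u) (f v) (\<sigma> i) = yoke_adj_at n m u v i"
    and \<sigma>: "\<And>i. i \<le> m \<Longrightarrow> \<sigma> i \<le> m" "\<And>i. i \<le> m \<Longrightarrow> \<sigma> (\<sigma> i) = i"
  shows "yoke_automorphism n m f"
proof -
  have "(\<exists>i\<le>m. yoke_adj_at n m (f u) (f v) i) \<longleftrightarrow> (\<exists>i\<le>m. yoke_adj_at n m u v i)"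
    if "u \<in> yoke_V n m" "v \<in> yoke_V n m" for u v
    using adj_at[OF that] \<sigma> by metis
  then show ?thesis
    using bij bij_betwE[OF bij] by (auto simp: yoke_automorphism_def yoke_adj_iff)
qed

lemma yoke_automorphism_shift: "yoke_automorphism n m (yoke_shift n m k)"
  by (rule yoke_automorphismI[where \<sigma> = id]) (simp_all add: bij_betw_yoke_shift yoke_adj_at_shift)

lemma yoke_automorphism_compl: "yoke_automorphism n m (yoke_compl n m)"
  by (rule yoke_automorphismI[where \<sigma> = id]) (simp_all add: bij_betw_yoke_compl yoke_adj_at_compl)

lemma yoke_automorphism_rev: "yoke_automorphism n m rev"
  by (rule yoke_automorphismI[where \<sigma> = "\<lambda>i. m - i"])
    (simp_all add: bij_betw_rev_yoke_V yoke_adj_at_rev yoke_V_length)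

section \<open>The group A(n,m)\<close>

definition yoke_flip :: "nat \<Rightarrow> nat \<Rightarrow> bool \<Rightarrow> bool \<Rightarrow> int list \<Rightarrow> int list" where
  "yoke_flip n m r c = (if r then rev else id) \<circ> (if c then yoke_compl n m else id)"

text \<open>\<^term>\<open>yoke_sym n m k r c\<close> is phi^k psi^r tau^c.\<close>

definition yoke_sym :: "nat \<Rightarrow> nat \<Rightarrow> int \<Rightarrow> bool \<Rightarrow> bool \<Rightarrow> int list \<Rightarrow> int list" where
  "yoke_sym n m k r c = restrict (yoke_shift n m k \<circ> yoke_flip n m r c) (yoke_V n m)"

definition yoke_syms :: "nat \<Rightarrow> nat \<Rightarrow> (int list \<Rightarrow> int list) set" where
  "yoke_syms n m = (\<lambda>(k, r, c). yoke_sym n m k r c) ` ({0..<int n} \<times> UNIV \<times> UNIV)"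

lemma yoke_flip_simps [simp]:
  "yoke_flip n m False False = id"
  "yoke_flip n m True False = rev"
  "yoke_flip n m False True = yoke_compl n m"
  by (simp_all add: yoke_flip_def)

lemma yoke_flip_in_V: "w \<in> yoke_V n m \<Longrightarrow> yoke_flip n m r c w \<in> yoke_V n m"
  by (simp add: yoke_flip_def rev_in_yoke_V yoke_compl_in_V)

lemma rev_yoke_flip: "rev (yoke_flip n m r c w) = yoke_flip n m (\<not> r) c w"
  by (simp add: yoke_flip_def)

lemma yoke_compl_flip:
  assumes "w \<in> yoke_V n m"
  shows "yoke_compl n m (yoke_flip n m r c w)
    = (if r then yoke_shift n m (int m) (yoke_flip n m r (\<not> c) w) else yoke_flip n m r (\<not> c) w)"
  using assms yoke_compl_compl[OF assms]
    yoke_compl_rev[of "(if c then yoke_compl n m else id) w" m n]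
  by (simp add: yoke_flip_def yoke_V_length)

lemma yoke_automorphism_flip: "yoke_automorphism n m (yoke_flip n m r c)"
  by (simp add: yoke_flip_def yoke_automorphism_comp yoke_automorphism_id yoke_automorphism_rev
      yoke_automorphism_compl)

lemma yoke_sym_in_aut: "yoke_sym n m k r c \<in> yoke_aut n m"
  by (simp add: yoke_sym_def restrict_in_yoke_aut yoke_automorphism_comp yoke_automorphism_shift
      yoke_automorphism_flip)

lemma yoke_sym_in_Bij: "yoke_sym n m k r c \<in> Bij (yoke_V n m)"
  using yoke_sym_in_aut by (simp add: yoke_aut_def)

lemma yoke_sym_mod: "yoke_sym n m (k mod int n) r c = yoke_sym n m k r c"
  unfolding yoke_sym_def
  by (rule restrict_ext) (simp add: yoke_shift_mod yoke_V_length[OF yoke_flip_in_V])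

lemma yoke_sym_in_syms: "n > 0 \<Longrightarrow> yoke_sym n m k r c \<in> yoke_syms n m"
  unfolding yoke_syms_def
  by (rule image_eqI[of _ _ "(k mod int n, r, c)"]) (simp_all add: yoke_sym_mod)

lemma yoke_phi_eq: "yoke_phi n m = yoke_sym n m 1 False False"
  unfolding yoke_phi_def yoke_sym_def
  by (rule restrict_ext) (simp add: yoke_shift_def)

lemma yoke_psi_eq: "yoke_psi n m = yoke_sym n m 0 True False"
  unfolding yoke_psi_def yoke_sym_def
  by (rule restrict_ext) (simp add: yoke_shift_0 rev_in_yoke_V)

lemma yoke_tau_eq: "yoke_tau n m = yoke_sym n m 0 False True"
  unfolding yoke_tau_def yoke_sym_def yoke_compl_def[symmetric]
  by (rule restrict_ext) (simp add: yoke_shift_0 yoke_compl_in_V)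

lemma BijGroup_one_yoke: "\<one>\<^bsub>BijGroup (yoke_V n m)\<^esub> = yoke_sym n m 0 False False"
  unfolding yoke_sym_def
  by (simp add: BijGroup_def yoke_shift_0 cong: restrict_cong)

lemma BijGroup_mult_yoke_sym:
  "yoke_sym n m a r c \<otimes>\<^bsub>BijGroup (yoke_V n m)\<^esub> yoke_sym n m k r' c'
    = restrict (yoke_shift n m a \<circ> yoke_flip n m r c \<circ> yoke_shift n m k \<circ> yoke_flip n m r' c')
        (yoke_V n m)"
proof -
  have "yoke_sym n m a r c \<otimes>\<^bsub>BijGroup (yoke_V n m)\<^esub> yoke_sym n m k r' c'
      = compose (yoke_V n m) (yoke_sym n m a r c) (yoke_sym n m k r' c')"
    by (simp add: BijGroup_mult yoke_sym_in_Bij)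
  then show ?thesis
    unfolding compose_def yoke_sym_def
    by (auto intro!: restrict_ext simp: yoke_shift_in_V yoke_flip_in_V)
qed

lemma yoke_shift_mult_sym:
  "yoke_sym n m a False False \<otimes>\<^bsub>BijGroup (yoke_V n m)\<^esub> yoke_sym n m k r c
    = yoke_sym n m (a + k) r c"
  unfolding BijGroup_mult_yoke_sym unfolding yoke_sym_def
  by (rule restrict_ext) (simp add: yoke_shift_add yoke_V_length[OF yoke_flip_in_V])

lemma yoke_psi_mult_sym:
  "yoke_psi n m \<otimes>\<^bsub>BijGroup (yoke_V n m)\<^esub> yoke_sym n m k r c = yoke_sym n m (- k) (\<not> r) c"
  unfolding yoke_psi_eq BijGroup_mult_yoke_sym unfolding yoke_sym_def
  by (rule restrict_ext)
    (simp add: rev_yoke_shift yoke_shift_0 yoke_shift_in_V rev_in_yoke_V rev_yoke_flip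
      yoke_V_length[OF yoke_flip_in_V] yoke_flip_in_V)

lemma yoke_tau_mult_sym:
  "yoke_tau n m \<otimes>\<^bsub>BijGroup (yoke_V n m)\<^esub> yoke_sym n m k r c
    = yoke_sym n m (if r then int m - k else - k) r (\<not> c)"
  unfolding yoke_tau_eq BijGroup_mult_yoke_sym unfolding yoke_sym_def
  by (rule restrict_ext)
    (simp add: yoke_compl_shift yoke_shift_0 yoke_shift_in_V yoke_compl_in_V yoke_compl_flip
      yoke_shift_add yoke_V_length[OF yoke_flip_in_V] yoke_flip_in_V)

lemma subgroup_yoke_aut: "subgroup (yoke_aut n m) (BijGroup (yoke_V n m))"
proof (rule group.subgroupI[OF group_BijGroup])
  show "yoke_aut n m \<subseteq> carrier (BijGroup (yoke_V n m))"
    by (auto simp: yoke_aut_def BijGroup_def)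
  show "yoke_aut n m \<noteq> {}"
    using restrict_in_yoke_aut[OF yoke_automorphism_id] by blast
next
  fix f assume f: "f \<in> yoke_aut n m"
  have "f \<in> Bij (yoke_V n m)" using f by (simp add: yoke_aut_def)
  moreover have "yoke_automorphism n m f" using f by (simp add: yoke_aut_iff)
  ultimately show "inv\<^bsub>BijGroup (yoke_V n m)\<^esub> f \<in> yoke_aut n m"
    by (simp add: inv_BijGroup restrict_in_yoke_aut yoke_automorphism_inv_into)
next
  fix f g assume f: "f \<in> yoke_aut n m" and g: "g \<in> yoke_aut n m"
  have "f \<in> Bij (yoke_V n m)" "g \<in> Bij (yoke_V n m)" using f g by (simp_all add: yoke_aut_def)
  moreover have "yoke_automorphism n m (f \<circ> g)"
    using f g by (simp add: yoke_aut_iff yoke_automorphism_comp)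
  ultimately show "f \<otimes>\<^bsub>BijGroup (yoke_V n m)\<^esub> g \<in> yoke_aut n m"
    using restrict_in_yoke_aut by (simp add: BijGroup_mult compose_def comp_def)
qed

lemma A_yoke_eq_generate:
  "A_yoke n m = generate (BijGroup (yoke_V n m)) {yoke_phi n m, yoke_psi n m, yoke_tau n m}"
  unfolding A_yoke_def AutYoke_def
  by (rule group.generate_consistent[OF group_BijGroup _ subgroup_yoke_aut])
    (simp add: yoke_phi_eq yoke_psi_eq yoke_tau_eq yoke_sym_in_aut)

lemma carrier_BijGroup_yoke_sym: "yoke_sym n m k r c \<in> carrier (BijGroup (yoke_V n m))"
  by (simp add: BijGroup_def yoke_sym_in_Bij)

lemma inv_yoke_phi: "inv\<^bsub>BijGroup (yoke_V n m)\<^esub> yoke_phi n m = yoke_sym n m (- 1) False False"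
  by (rule group.inv_equality[OF group_BijGroup])
    (simp_all add: yoke_phi_eq yoke_shift_mult_sym BijGroup_one_yoke carrier_BijGroup_yoke_sym)

lemma inv_yoke_psi: "inv\<^bsub>BijGroup (yoke_V n m)\<^esub> yoke_psi n m = yoke_psi n m"
  by (rule group.inv_equality[OF group_BijGroup])
    (simp_all add: yoke_psi_mult_sym[unfolded yoke_psi_eq] yoke_psi_eq BijGroup_one_yoke
      carrier_BijGroup_yoke_sym)

lemma inv_yoke_tau: "inv\<^bsub>BijGroup (yoke_V n m)\<^esub> yoke_tau n m = yoke_tau n m"
  by (rule group.inv_equality[OF group_BijGroup])
    (simp_all add: yoke_tau_mult_sym[unfolded yoke_tau_eq] yoke_tau_eq BijGroup_one_yoke
      carrier_BijGroup_yoke_sym)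

lemma A_yoke_subset_syms:
  assumes "n > 0"
  shows "A_yoke n m \<subseteq> yoke_syms n m"
  unfolding A_yoke_eq_generate
proof (rule group.generate_subset_left_closed[OF group_BijGroup])
  show "{yoke_phi n m, yoke_psi n m, yoke_tau n m} \<subseteq> carrier (BijGroup (yoke_V n m))"
    by (simp add: yoke_phi_eq yoke_psi_eq yoke_tau_eq carrier_BijGroup_yoke_sym)
  show "yoke_syms n m \<subseteq> carrier (BijGroup (yoke_V n m))"
    by (auto simp: yoke_syms_def carrier_BijGroup_yoke_sym)
  show "\<one>\<^bsub>BijGroup (yoke_V n m)\<^esub> \<in> yoke_syms n m"
    by (simp add: BijGroup_one_yoke yoke_sym_in_syms assms)
next
  fix h s assume h: "h \<in> {yoke_phi n m, yoke_psi n m, yoke_tau n m}" and "s \<in> yoke_syms n m"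
  then obtain k r c where s: "s = yoke_sym n m k r c"
    by (auto simp: yoke_syms_def)
  note mult_laws = yoke_shift_mult_sym yoke_psi_mult_sym yoke_tau_mult_sym yoke_sym_in_syms[OF assms]
  from h show "h \<otimes>\<^bsub>BijGroup (yoke_V n m)\<^esub> s \<in> yoke_syms n m"
    by (auto simp: s yoke_phi_eq mult_laws)
  from h show "inv\<^bsub>BijGroup (yoke_V n m)\<^esub> h \<otimes>\<^bsub>BijGroup (yoke_V n m)\<^esub> s \<in> yoke_syms n m"
    by (auto simp: s inv_yoke_phi inv_yoke_psi inv_yoke_tau mult_laws)
qed

lemma yoke_sym_in_A_yoke: "yoke_sym n m (int k) r c \<in> A_yoke n m"
proof (induction k)
  case 0
  have "yoke_sym n m 0 False False \<in> A_yoke n m"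
    unfolding A_yoke_eq_generate BijGroup_one_yoke[symmetric] by (rule generate.one)
  moreover have psi: "yoke_sym n m 0 True False \<in> A_yoke n m"
    unfolding A_yoke_eq_generate yoke_psi_eq[symmetric] by (rule generate.incl) simp
  moreover have tau: "yoke_sym n m 0 False True \<in> A_yoke n m"
    unfolding A_yoke_eq_generate yoke_tau_eq[symmetric] by (rule generate.incl) simp
  moreover have "yoke_sym n m 0 True True \<in> A_yoke n m"
    using generate.eng[OF psi[unfolded A_yoke_eq_generate] tau[unfolded A_yoke_eq_generate]]
    by (simp add: A_yoke_eq_generate yoke_psi_eq[symmetric] yoke_psi_mult_sym)
  ultimately show ?case
    by (cases r; cases c) simp_all
next
  case (Suc k)
  have phi: "yoke_phi n m \<in> A_yoke n m"
    unfolding A_yoke_eq_generate by (rule generate.incl) simp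
  show ?case
    using generate.eng[OF phi[unfolded A_yoke_eq_generate] Suc[unfolded A_yoke_eq_generate]]
    by (simp add: A_yoke_eq_generate yoke_phi_eq yoke_shift_mult_sym add.commute)
qed

lemma A_yoke_eq_syms:
  assumes "n > 0"
  shows "A_yoke n m = yoke_syms n m"
proof
  show "yoke_syms n m \<subseteq> A_yoke n m"
  proof
    fix f assume "f \<in> yoke_syms n m"
    then obtain k r c where "f = yoke_sym n m k r c" "k \<ge> 0"
      by (auto simp: yoke_syms_def)
    then show "f \<in> A_yoke n m"
      using yoke_sym_in_A_yoke[of n m "nat k" r c] by simp
  qed
qed (rule A_yoke_subset_syms[OF assms])

section \<open>The 4n elements are distinct\<close>

definition yoke_probe :: "nat \<Rightarrow> nat \<Rightarrow> int list" where
  "yoke_probe n m = (replicate (m + 2) 0)[1 := 1, m + 1 := int n - 1]"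

lemma replicate_in_yoke_V: "n > 0 \<Longrightarrow> replicate (m + 2) 0 \<in> yoke_V n m"
  by (simp add: yoke_V_def sum_list_replicate del: replicate.simps)

lemma length_yoke_probe [simp]: "length (yoke_probe n m) = m + 2"
  by (simp add: yoke_probe_def del: replicate.simps)

lemma nth_yoke_probe:
  "m \<ge> 1 \<Longrightarrow> i < m + 2 \<Longrightarrow>
    yoke_probe n m ! i = (if i = m + 1 then int n - 1 else if i = 1 then 1 else 0)"
  by (simp add: yoke_probe_def nth_list_update del: replicate.simps)

lemma yoke_probe_in_V:
  assumes "n > 0" "m \<ge> 1"
  shows "yoke_probe n m \<in> yoke_V n m"
proof -
  have len: "length (yoke_probe n m) = m + 2" by simp
  have "(\<Sum>i=1..m. yoke_probe n m ! i) = (\<Sum>i=1..m. if i = 1 then 1 else 0)"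
    using assms(2) by (intro sum.cong) (simp_all add: nth_yoke_probe)
  then have "sum_list (yoke_probe n m) = int n"
    using sum_list_split_ends[OF len] assms(2) by (simp add: nth_yoke_probe)
  then show ?thesis
    using len assms by (auto simp: yoke_V_def nth_yoke_probe)
qed

lemma nth_yoke_sym_0:
  "x \<in> yoke_V n m \<Longrightarrow> yoke_sym n m k r c x ! 0 = (yoke_flip n m r c x ! 0 + k) mod int n"
  by (simp add: yoke_sym_def nth_yoke_shift yoke_V_length[OF yoke_flip_in_V])

lemma nth_yoke_sym_1:
  "m \<ge> 1 \<Longrightarrow> x \<in> yoke_V n m \<Longrightarrow> yoke_sym n m k r c x ! 1 = yoke_flip n m r c x ! 1"
  by (simp add: yoke_sym_def nth_yoke_shift yoke_V_length[OF yoke_flip_in_V])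

lemma nth_yoke_flip_replicate_1:
  "m \<ge> 1 \<Longrightarrow> yoke_flip n m r c (replicate (m + 2) 0) ! 1 = (if c then 1 else 0)"
  by (simp add: yoke_flip_def nth_yoke_compl rev_nth del: replicate.simps)

lemma nth_yoke_flip_probe_1:
  "m \<ge> 2 \<Longrightarrow> yoke_flip n m r c (yoke_probe n m) ! 1 = (if r = c then 1 else 0)"
  by (simp add: yoke_flip_def nth_yoke_compl nth_rev_length_add_2 nth_yoke_probe)

lemma nth_yoke_flip_replicate_0:
  "m = 1 \<Longrightarrow> n > 0 \<Longrightarrow>
    yoke_flip n m r c (replicate (m + 2) 0) ! 0 = (if r \<and> c then int n - 1 else 0)"
  by (simp add: yoke_flip_def nth_yoke_compl rev_nth minus_one_mod_int)

lemma nth_yoke_flip_probe_0: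
  "m = 1 \<Longrightarrow> yoke_flip n m r c (yoke_probe n m) ! 0 = (if r \<and> \<not> c then int n - 1 else 0)"
  by (simp add: yoke_flip_def yoke_probe_def nth_yoke_compl rev_nth)

lemma yoke_sym_eq_imp_compl_eq:
  assumes n: "n > 0" and m: "m \<ge> 1" and eq: "yoke_sym n m k r c = yoke_sym n m k' r' c'"
  shows "c = c'"
proof -
  let ?z = "replicate (m + 2) 0"
  have "yoke_flip n m r c ?z ! 1 = yoke_flip n m r' c' ?z ! 1"
    using arg_cong[OF eq, of "\<lambda>f. f ?z ! 1"]
    by (simp only: nth_yoke_sym_1[OF m replicate_in_yoke_V[OF n]])
  then show ?thesis
    unfolding nth_yoke_flip_replicate_1[OF m] by (simp split: if_splits)
qed

lemma yoke_sym_eq_imp_rev_eq: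
  assumes n: "n > 0" and m: "m \<ge> 1" and nm: "(n, m) \<noteq> (1, 1)"
    and k: "k \<in> {0..<int n}" "k' \<in> {0..<int n}"
    and eq: "yoke_sym n m k r c = yoke_sym n m k' r' c'"
  shows "r = r'"
proof (cases "m \<ge> 2")
  case True
  have "yoke_flip n m r c (yoke_probe n m) ! 1 = yoke_flip n m r' c' (yoke_probe n m) ! 1"
    using arg_cong[OF eq, of "\<lambda>f. f (yoke_probe n m) ! 1"]
    by (simp only: nth_yoke_sym_1[OF m yoke_probe_in_V[OF n m]])
  then show ?thesis
    using yoke_sym_eq_imp_compl_eq[OF n m eq] unfolding nth_yoke_flip_probe_1[OF True]
    by (simp split: if_splits)
next
  case False
  txt \<open>The middle bit of a vertex of Y(n,1) is fixed by reversal, so r is read off bucket 0.\<close>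
  with m nm n have "m = 1" "n \<ge> 2" by auto
  let ?z = "replicate (m + 2) 0" and ?p = "yoke_probe n m"
  have "(yoke_flip n m r c ?z ! 0 + k) mod int n = (yoke_flip n m r' c' ?z ! 0 + k') mod int n"
    using arg_cong[OF eq, of "\<lambda>f. f ?z ! 0"]
    by (simp only: nth_yoke_sym_0[OF replicate_in_yoke_V[OF n]])
  moreover have "(yoke_flip n m r c ?p ! 0 + k) mod int n = (yoke_flip n m r' c' ?p ! 0 + k') mod int n"
    using arg_cong[OF eq, of "\<lambda>f. f ?p ! 0"]
    by (simp only: nth_yoke_sym_0[OF yoke_probe_in_V[OF n m]])
  ultimately show ?thesis
    using yoke_sym_eq_imp_compl_eq[OF n m eq] k minus_one_add_mod_ne[OF \<open>n \<ge> 2\<close> k(2)]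
    unfolding nth_yoke_flip_replicate_0[OF \<open>m = 1\<close> n] nth_yoke_flip_probe_0[OF \<open>m = 1\<close>]
    by (cases r; cases r'; cases c) auto
qed

lemma yoke_sym_inject:
  assumes n: "n > 0" and m: "m > 0" and nm: "(n, m) \<noteq> (1, 1)"
    and k: "k \<in> {0..<int n}" "k' \<in> {0..<int n}"
    and eq: "yoke_sym n m k r c = yoke_sym n m k' r' c'"
  shows "k = k' \<and> r = r' \<and> c = c'"
proof -
  from m have m1: "m \<ge> 1" by simp
  have c: "c = c'" and r: "r = r'"
    using yoke_sym_eq_imp_compl_eq[OF n m1 eq] yoke_sym_eq_imp_rev_eq[OF n m1 nm k eq] by simp_all
  let ?a = "yoke_flip n m r c (replicate (m + 2) 0) ! 0"
  have "(?a + k) mod int n = (?a + k') mod int n"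
    using arg_cong[OF eq, of "\<lambda>f. f (replicate (m + 2) 0) ! 0"]
    by (simp only: nth_yoke_sym_0[OF replicate_in_yoke_V[OF n]] r c)
  then have "[k = k'] (mod int n)"
    using cong_add_lcancel[of ?a k k' "int n"] by (simp add: cong_def)
  then show ?thesis
    using k r c by (simp add: cong_def)
qed

lemma card_yoke_syms:
  assumes "n > 0" "m > 0" "(n, m) \<noteq> (1, 1)"
  shows "card (yoke_syms n m) = 4 * n"
proof -
  have "inj_on (\<lambda>(k, r, c). yoke_sym n m k r c) ({0..<int n} \<times> UNIV \<times> UNIV)"
  proof (rule inj_onI)
    fix x y :: "int \<times> bool \<times> bool"
    assume "x \<in> {0..<int n} \<times> UNIV \<times> UNIV" "y \<in> {0..<int n} \<times> UNIV \<times> UNIV"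
      and "(\<lambda>(k, r, c). yoke_sym n m k r c) x = (\<lambda>(k, r, c). yoke_sym n m k r c) y"
    then show "x = y"
      using yoke_sym_inject[OF assms]
      by (cases x; cases y) (simp only: prod.case mem_Times_iff fst_conv prod.inject, blast)
  qed
  then have "card (yoke_syms n m) = card ({0..<int n} \<times> (UNIV :: bool set) \<times> (UNIV :: bool set))"
    unfolding yoke_syms_def by (rule card_image)
  also have "\<dots> = 4 * n"
    by (simp only: card_cartesian_product card_atLeastLessThan_int card_UNIV_bool)
  finally show ?thesis .
qed

theorem lemma6p11:
  fixes n m :: nat
  assumes "n \<ge> 1" and "m > 0" and "(n, m) \<noteq> (1, 1)"
  shows "card (A_yoke n m) = 4 * n"
proof -
  have "n > 0" using assms(1) by simp
  then show ?thesis
    using A_yoke_eq_syms card_yoke_syms assms(2,3) by simp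
qed

end
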